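(* Let $C=w_1-\dots-w_m$ be a chain with positive weights. If there exists an admissible decomposition of $C$ into $k$ subchains with $k>2$, then there exists an admissible decomposition of $C$ into $k-1$ subchains.
   Context: A decomposition of $C=w_1-\dots-w_m$ into $p+1$ subchains is given by integers $0=i_0<i_1<\dots<i_p<i_{p+1}=m$, with $C_j=w_{i_{j-1}+1}-\dots-w_{i_j}$. Let $\tilde\Sigma_{\rm odd}(C_j)=\sum\{w_i : i_{j-1}<i\le i_j,\ i\text{ odd}\}$ and $\tilde\Sigma_{\rm even}(C_j)=\sum\{w_i : i_{j-1}<i\le i_j,\ i\text{ even}\}$ (parity with respect to the numbering in $C$), and for $1\le j\le p$ let $\Delta_j=\tilde\Sigma_{\rm even}(C_j)\tilde\Sigma_{\rm odd}(C_{j+1})-\tilde\Sigma_{\rm even}(C_{j+1})\tilde\Sigma_{\rm odd}(C_j)$. The decomposition is admissible if every $C_j$ has at least two edges and, for every $1\le j\le p$, $\Delta_j<0$ when $i_j$ is even and $\Delta_j>0$ when $i_j$ is odd. *)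

theory Defs
  imports Complex_Main
begin

text \<open>A chain C = w_1 - ... - w_m is given by its length m and weights w :: nat => real
  (only w 1, ..., w m are relevant). A decomposition into p+1 subchains is given by
  cut points i 0 = 0 < i 1 < ... < i p < i (p+1) = m; subchain C_j (1 <= j <= p+1)
  consists of the positions l with i (j-1) < l <= i j.\<close>

definition is_decomposition :: "nat \<Rightarrow> nat \<Rightarrow> (nat \<Rightarrow> nat) \<Rightarrow> bool" where
  "is_decomposition m p i \<longleftrightarrow>
     i 0 = 0 \<and> i (Suc p) = m \<and> (\<forall>j\<le>p. i j < i (Suc j))"

definition sigma_odd :: "(nat \<Rightarrow> real) \<Rightarrow> (nat \<Rightarrow> nat) \<Rightarrow> nat \<Rightarrow> real" where
  "sigma_odd w i j = (\<Sum>l \<in> {l. i (j - 1) < l \<and> l \<le> i j \<and> odd l}. w l)"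

definition sigma_even :: "(nat \<Rightarrow> real) \<Rightarrow> (nat \<Rightarrow> nat) \<Rightarrow> nat \<Rightarrow> real" where
  "sigma_even w i j = (\<Sum>l \<in> {l. i (j - 1) < l \<and> l \<le> i j \<and> even l}. w l)"

definition Delta :: "(nat \<Rightarrow> real) \<Rightarrow> (nat \<Rightarrow> nat) \<Rightarrow> nat \<Rightarrow> real" where
  "Delta w i j = sigma_even w i j * sigma_odd w i (Suc j) - sigma_even w i (Suc j) * sigma_odd w i j"

text \<open>Admissible decomposition of C into p+1 subchains. Each subchain C_j has
  i j - i (j-1) edges (the weights w_l are edge weights).\<close>
definition admissible :: "nat \<Rightarrow> (nat \<Rightarrow> real) \<Rightarrow> nat \<Rightarrow> (nat \<Rightarrow> nat) \<Rightarrow> bool" where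
  "admissible m w p i \<longleftrightarrow>
     is_decomposition m p i \<and>
     (\<forall>j \<in> {1..Suc p}. i (j - 1) + 2 \<le> i j) \<and>
     (\<forall>j \<in> {1..p}. (even (i j) \<longrightarrow> Delta w i j < 0) \<and> (odd (i j) \<longrightarrow> Delta w i j > 0))"

end

theory Submission
  imports Defs
begin

text \<open>Write r_j = \<Sigma>even(C_j) / \<Sigma>odd(C_j) for the slope of the j-th subchain. For positive
  weights the sign condition on \<Delta>_j says that the slopes increase across an even cut i_j and
  decrease across an odd one. Deleting the cut i_j merges C_j and C_(j+1) into one subchain whose
  slope is the mediant of r_j and r_(j+1), hence lies strictly between them; all other cut
  conditions survive, except possibly those at i_(j-1) and i_(j+1). Let j be the least index for
  which the condition at i_(j+1) survives (merging the last two subchains always qualifies). If j > 1, the condition at i_j failed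
  for the merge at j-1, and since both mediants lie strictly between neighbouring slopes, this
  forces the condition at i_(j-1) to hold for the merge at j.\<close>

definition directed :: "bool \<Rightarrow> real \<Rightarrow> real \<Rightarrow> bool" where
  "directed up x y \<longleftrightarrow> (if up then x < y else y < x)"

definition strictly_between :: "real \<Rightarrow> real \<Rightarrow> real \<Rightarrow> bool" where
  "strictly_between u x y \<longleftrightarrow> min x y < u \<and> u < max x y"

lemma directed_through_between:
  assumes "directed a x y" "directed b y z"
    and "strictly_between v x y" "strictly_between u y z"
  shows "directed b v z \<or> directed a x u"
  using assms unfolding directed_def strictly_between_def
  by (cases a; cases b) auto

lemma exists_mergeable_index:
  fixes r M :: "nat \<Rightarrow> real" and up :: "nat \<Rightarrow> bool"
  assumes "1 \<le> p"
    and directed: "\<And>j. 1 \<le> j \<Longrightarrow> j \<le> p \<Longrightarrow> directed (up j) (r j) (r (Suc j))"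
    and between: "\<And>j. 1 \<le> j \<Longrightarrow> j \<le> p \<Longrightarrow> strictly_between (M j) (r j) (r (Suc j))"
  obtains j where "1 \<le> j" "j \<le> p"
    "j = 1 \<or> directed (up (j - 1)) (r (j - 1)) (M j)"
    "j = p \<or> directed (up (Suc j)) (M j) (r (Suc (Suc j)))"
proof -
  define R where "R j \<longleftrightarrow> 1 \<le> j \<and> (j = p \<or> directed (up (Suc j)) (M j) (r (Suc (Suc j))))" for j
  define j where "j = (LEAST j. R j)"
  have "R p"
    using \<open>1 \<le> p\<close> by (simp add: R_def)
  then have "R j" "j \<le> p"
    unfolding j_def by (auto intro: LeastI Least_le)
  moreover have "j = 1 \<or> directed (up (j - 1)) (r (j - 1)) (M j)"
  proof (cases "j = 1")
    case False
    with \<open>R j\<close> \<open>j \<le> p\<close> have j: "1 \<le> j - 1" "j - 1 < p" "Suc (j - 1) = j"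
      by (auto simp: R_def)
    have "\<not> R (j - 1)"
      unfolding j_def by (rule not_less_Least) (use j in \<open>simp add: j_def\<close>)
    then have "\<not> directed (up j) (M (j - 1)) (r (Suc j))"
      using j by (auto simp: R_def)
    then show ?thesis
      using directed_through_between[of "up (j - 1)" "r (j - 1)" "r j" "up j" "r (Suc j)" "M (j - 1)" "M j"]
        directed[of "j - 1"] directed[of j] between[of "j - 1"] between[of j] j
      by auto
  qed simp
  ultimately show thesis
    using that R_def by blast
qed

lemma is_decomposition_mono:
  assumes "is_decomposition m p i" "a \<le> b" "b \<le> Suc p"
  shows "i a \<le> i b"
proof -
  have "i n \<le> i (Suc n)" if "n \<in> {..p}" for n
    using assms(1) that by (auto simp: is_decomposition_def less_imp_le)
  moreover have "{a..<b} \<subseteq> {..p}"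
    using assms(3) by auto
  ultimately show ?thesis
    using lift_Suc_mono_le_ivl assms(2) by metis
qed

lemma is_decomposition_le_length:
  assumes "is_decomposition m p i" "j \<le> Suc p"
  shows "i j \<le> m"
  using is_decomposition_mono[OF assms] assms(1) by (simp add: is_decomposition_def)

lemma finite_block: "finite {l::nat. a < l \<and> l \<le> b \<and> P l}"
  by (rule finite_subset[of _ "{..b}"]) auto

lemma block_sum_split:
  fixes f :: "nat \<Rightarrow> 'a::comm_monoid_add"
  assumes "a \<le> b" "b \<le> c"
  shows "(\<Sum>l | a < l \<and> l \<le> c \<and> P l. f l)
    = (\<Sum>l | a < l \<and> l \<le> b \<and> P l. f l) + (\<Sum>l | b < l \<and> l \<le> c \<and> P l. f l)"
proof -
  have "{l. a < l \<and> l \<le> c \<and> P l} = {l. a < l \<and> l \<le> b \<and> P l} \<union> {l. b < l \<and> l \<le> c \<and> P l}"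
    using assms by auto
  then show ?thesis
    by (simp add: sum.union_disjoint[OF finite_block finite_block] disjoint_iff)
qed

lemma block_sum_pos:
  fixes f :: "nat \<Rightarrow> 'a::ordered_comm_monoid_add"
  assumes "\<And>l. a < l \<Longrightarrow> l \<le> b \<Longrightarrow> f l > 0" "a < c" "c \<le> b" "P c"
  shows "(\<Sum>l | a < l \<and> l \<le> b \<and> P l. f l) > 0"
  using assms by (intro sum_pos finite_block) auto

lemma sigma_pos:
  assumes "\<forall>l\<in>{1..m}. w l > 0" "i (j - 1) + 2 \<le> i j" "i j \<le> m"
  shows "sigma_odd w i j > 0" "sigma_even w i j > 0"
proof -
  let ?a = "i (j - 1)"
  have pos: "w l > 0" if "?a < l" "l \<le> i j" for l
    using assms that by auto
  have "odd (?a + 1) \<or> odd (?a + 2)" "even (?a + 1) \<or> even (?a + 2)"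
    by simp_all
  then obtain c d where c: "c \<in> {?a + 1, ?a + 2}" "odd c" and d: "d \<in> {?a + 1, ?a + 2}" "even d"
    by blast
  show "sigma_odd w i j > 0"
    unfolding sigma_odd_def by (rule block_sum_pos[of _ _ w c]) (use pos c assms(2) in auto)
  show "sigma_even w i j > 0"
    unfolding sigma_even_def by (rule block_sum_pos[of _ _ w d]) (use pos d assms(2) in auto)
qed

definition slope :: "(nat \<Rightarrow> real) \<Rightarrow> (nat \<Rightarrow> nat) \<Rightarrow> nat \<Rightarrow> real" where
  "slope w i j = sigma_even w i j / sigma_odd w i j"

lemma Delta_sign_iff_directed:
  assumes "sigma_odd w i j > 0" "sigma_odd w i (Suc j) > 0"
  shows "((even (i j) \<longrightarrow> Delta w i j < 0) \<and> (odd (i j) \<longrightarrow> Delta w i j > 0))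
    \<longleftrightarrow> directed (even (i j)) (slope w i j) (slope w i (Suc j))"
  using assms by (auto simp: Delta_def slope_def directed_def field_simps)

lemma admissible_iff_directed_slopes:
  assumes pos: "\<forall>l\<in>{1..m}. w l > 0" and dec: "is_decomposition m p i"
    and long: "\<forall>j\<in>{1..Suc p}. i (j - 1) + 2 \<le> i j"
  shows "admissible m w p i \<longleftrightarrow> (\<forall>j\<in>{1..p}. directed (even (i j)) (slope w i j) (slope w i (Suc j)))"
proof -
  have "sigma_odd w i j > 0" if "j \<in> {1..Suc p}" for j
    using sigma_pos(1)[OF pos] long is_decomposition_le_length[OF dec] that by auto
  then show ?thesis
    using dec long Delta_sign_iff_directed unfolding admissible_def by auto
qed

lemma admissible_directed_slopes:
  assumes "\<forall>l\<in>{1..m}. w l > 0" "admissible m w p i" "j \<in> {1..p}"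
  shows "directed (even (i j)) (slope w i j) (slope w i (Suc j))"
  using assms admissible_iff_directed_slopes[OF assms(1)] by (auto simp: admissible_def)

definition merge_cut :: "(nat \<Rightarrow> nat) \<Rightarrow> nat \<Rightarrow> nat \<Rightarrow> nat" where
  "merge_cut i j t = (if t < j then i t else i (Suc t))"

lemma is_decomposition_merge_cut:
  assumes "is_decomposition m p i" "1 \<le> j" "j \<le> p"
  shows "is_decomposition m (p - 1) (merge_cut i j)"
proof -
  have step: "i t < i (Suc t)" if "t \<le> p" for t
    using assms(1) that by (simp add: is_decomposition_def)
  have "merge_cut i j t < merge_cut i j (Suc t)" if "t \<le> p - 1" for t
    using step[of t] step[of "Suc t"] that assms(2,3) by (auto simp: merge_cut_def)
  then show ?thesis
    using assms unfolding is_decomposition_def merge_cut_def by auto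
qed

lemma long_blocks_merge_cut:
  assumes long: "\<forall>t\<in>{1..Suc p}. i (t - 1) + 2 \<le> i t" and j: "1 \<le> j" "j \<le> p"
  shows "\<forall>t\<in>{1..Suc (p - 1)}. merge_cut i j (t - 1) + 2 \<le> merge_cut i j t"
proof
  fix t assume t: "t \<in> {1..Suc (p - 1)}"
  consider "t < j" | "t = j" | "j < t" by linarith
  then show "merge_cut i j (t - 1) + 2 \<le> merge_cut i j t"
  proof cases
    case 1
    then have "t - 1 < j" by simp
    with \<open>t < j\<close> show ?thesis using long[rule_format, of t] t j by (simp add: merge_cut_def)
  next
    case 2
    then show ?thesis using long[rule_format, of j] long[rule_format, of "Suc j"] j
      by (simp add: merge_cut_def)
  next
    case 3
    then have "\<not> t - 1 < j" "Suc (t - 1) = t" using j by auto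
    with \<open>j < t\<close> show ?thesis using long[rule_format, of "Suc t"] t j by (simp add: merge_cut_def)
  qed
qed

lemma block_sum_merge_cut:
  fixes f :: "nat \<Rightarrow> 'a::comm_monoid_add"
  assumes "1 \<le> j" "i (j - 1) \<le> i j" "i j \<le> i (Suc j)"
  shows "(\<Sum>l | merge_cut i j (t - 1) < l \<and> l \<le> merge_cut i j t \<and> P l. f l) =
    (if t < j then (\<Sum>l | i (t - 1) < l \<and> l \<le> i t \<and> P l. f l)
     else if t = j then (\<Sum>l | i (j - 1) < l \<and> l \<le> i j \<and> P l. f l)
       + (\<Sum>l | i j < l \<and> l \<le> i (Suc j) \<and> P l. f l)
     else (\<Sum>l | i t < l \<and> l \<le> i (Suc t) \<and> P l. f l))"
proof -
  consider "t < j" | "t = j" | "j < t" by linarith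
  then show ?thesis
  proof cases
    case 2
    then show ?thesis
      using assms block_sum_split[OF assms(2,3)] by (simp add: merge_cut_def)
  next
    case 3
    then have "\<not> t - 1 < j" "Suc (t - 1) = t" by auto
    with \<open>j < t\<close> show ?thesis by (simp add: merge_cut_def)
  qed (simp add: merge_cut_def)
qed

lemma sigma_merge_cut:
  assumes "1 \<le> j" "i (j - 1) \<le> i j" "i j \<le> i (Suc j)"
  shows "sigma_odd w (merge_cut i j) t = (if t < j then sigma_odd w i t
      else if t = j then sigma_odd w i j + sigma_odd w i (Suc j) else sigma_odd w i (Suc t))"
    and "sigma_even w (merge_cut i j) t = (if t < j then sigma_even w i t
      else if t = j then sigma_even w i j + sigma_even w i (Suc j) else sigma_even w i (Suc t))"
  unfolding sigma_odd_def sigma_even_def block_sum_merge_cut[OF assms] by simp_all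

lemma slope_merge_cut:
  assumes "1 \<le> j" "i (j - 1) \<le> i j" "i j \<le> i (Suc j)"
  shows "slope w (merge_cut i j) t = (if t < j then slope w i t
      else if t = j then (sigma_even w i j + sigma_even w i (Suc j)) / (sigma_odd w i j + sigma_odd w i (Suc j))
      else slope w i (Suc t))"
  by (simp add: slope_def sigma_merge_cut[OF assms])

lemma mediant_strictly_between:
  fixes a b c d :: real
  assumes "b > 0" "d > 0" "a / b \<noteq> c / d"
  shows "strictly_between ((a + c) / (b + d)) (a / b) (c / d)"
proof (cases "a / b < c / d")
  case True
  then have "a * d < c * b"
    using assms by (simp add: field_simps)
  then show ?thesis
    using True assms by (simp add: strictly_between_def field_simps)
next
  case False
  then have "c * b < a * d"
    using assms by (simp add: field_simps)
  then show ?thesis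
    using False assms by (simp add: strictly_between_def field_simps)
qed

lemma admissible_merged_slope_between:
  assumes pos: "\<forall>l\<in>{1..m}. w l > 0" and adm: "admissible m w p i" and j: "1 \<le> j" "j \<le> p"
  shows "strictly_between (slope w (merge_cut i j) j) (slope w i j) (slope w i (Suc j))"
proof -
  have dec: "is_decomposition m p i" and long: "\<forall>t\<in>{1..Suc p}. i (t - 1) + 2 \<le> i t"
    using adm by (simp_all add: admissible_def)
  have odd_pos: "sigma_odd w i t > 0" if "t \<in> {j, Suc j}" for t
  proof -
    have "t \<in> {1..Suc p}"
      using that j by auto
    then show ?thesis
      by (intro sigma_pos(1)[OF pos]) (use long is_decomposition_le_length[OF dec] in auto)
  qed
  have "directed (even (i j)) (slope w i j) (slope w i (Suc j))"
    using admissible_directed_slopes[OF pos adm] j by simp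
  then have "slope w i j \<noteq> slope w i (Suc j)"
    by (auto simp: directed_def split: if_splits)
  moreover have "slope w (merge_cut i j) j = (sigma_even w i j + sigma_even w i (Suc j))
      / (sigma_odd w i j + sigma_odd w i (Suc j))"
    using slope_merge_cut[OF j(1) is_decomposition_mono[OF dec] is_decomposition_mono[OF dec]] j
    by simp
  ultimately show ?thesis
    using mediant_strictly_between odd_pos by (simp add: slope_def)
qed

lemma admissible_merge_cut:
  assumes pos: "\<forall>l\<in>{1..m}. w l > 0" and adm: "admissible m w p i" and j: "1 \<le> j" "j \<le> p"
    and left: "j = 1 \<or> directed (even (i (j - 1))) (slope w i (j - 1)) (slope w (merge_cut i j) j)"
    and right: "j = p \<or> directed (even (i (Suc j))) (slope w (merge_cut i j) j) (slope w i (Suc (Suc j)))"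
  shows "admissible m w (p - 1) (merge_cut i j)"
proof -
  have dec: "is_decomposition m p i" and long: "\<forall>t\<in>{1..Suc p}. i (t - 1) + 2 \<le> i t"
    using adm by (simp_all add: admissible_def)
  have slope': "slope w (merge_cut i j) t = (if t < j then slope w i t else slope w i (Suc t))"
    if "t \<noteq> j" for t
    using slope_merge_cut is_decomposition_mono[OF dec, of "j - 1" j]
      is_decomposition_mono[OF dec, of j "Suc j"] j that by simp
  show ?thesis
    unfolding admissible_iff_directed_slopes[OF pos is_decomposition_merge_cut[OF dec j]
      long_blocks_merge_cut[OF long j]]
  proof
    fix t assume t: "t \<in> {1..p - 1}"
    consider "Suc t < j" | "Suc t = j" | "t = j" | "j < t" by linarith
    then show "directed (even (merge_cut i j t)) (slope w (merge_cut i j) t) (slope w (merge_cut i j) (Suc t))"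
    proof cases
      case 1
      then show ?thesis using admissible_directed_slopes[OF pos adm, of t] t slope' by (auto simp: merge_cut_def)
    next
      case 2
      then have "j \<noteq> 1" "t = j - 1" using t by auto
      then show ?thesis using left 2 slope' by (simp add: merge_cut_def)
    next
      case 3
      then have "j \<noteq> p" using t by auto
      then show ?thesis using right 3 slope' by (simp add: merge_cut_def)
    next
      case 4
      then show ?thesis using admissible_directed_slopes[OF pos adm, of "Suc t"] t slope' by (auto simp: merge_cut_def)
    qed
  qed
qed

theorem mainTheorem8:
  fixes w :: "nat \<Rightarrow> real" and m k :: nat
  assumes "\<forall>l \<in> {1..m}. w l > 0"
    and "k > 2"
    and "\<exists>i. admissible m w (k - 1) i"
  shows "\<exists>i. admissible m w (k - 2) i"
proof -
  define p where "p = k - 1"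
  obtain i where adm: "admissible m w p i"
    using assms(3) unfolding p_def by blast
  have "1 \<le> p"
    using assms(2) by (simp add: p_def)
  then obtain j where "1 \<le> j" "j \<le> p"
    "j = 1 \<or> directed (even (i (j - 1))) (slope w i (j - 1)) (slope w (merge_cut i j) j)"
    "j = p \<or> directed (even (i (Suc j))) (slope w (merge_cut i j) j) (slope w i (Suc (Suc j)))"
    using exists_mergeable_index[of p "\<lambda>t. even (i t)" "slope w i" "\<lambda>t. slope w (merge_cut i t) t"]
      admissible_directed_slopes[OF assms(1) adm] admissible_merged_slope_between[OF assms(1) adm]
    by auto
  then have "admissible m w (p - 1) (merge_cut i j)"
    by (rule admissible_merge_cut[OF assms(1) adm])
  moreover have "p - 1 = k - 2"
    by (simp add: p_def)
  ultimately show ?thesis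
    by auto
qed

end
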